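(* Let $\mathcal D=\{d_1,\dots,d_s\}$ and $\mathcal H=\{h_1,\dots,h_n\}$ be finite sets, where each hypothesis $h_i$ is a probability distribution $\mathbb P[\cdot\mid h_i]$ on $\mathcal D$, the hypotheses $h_1,\dots,h_n$ are pairwise distinct as distributions, and the prior $\bm p=(p_1,\dots,p_n)$ on $\mathcal H$ satisfies $p_i>0$ for all $i$. Consider chained iterated learning with initial hypothesis $\bm h_{\mathrm{init}}=h_1$ and sample sizes $m_1,m_2,\dots$. Let ${\tt d}_1=\min_{j\neq 1} d_{RS}(\mathbb P[\cdot\mid h_1],\mathbb P[\cdot\mid h_j])$. Then for any $0<\varepsilon<1$, the sample size sequence $$m_t=\frac{4}{{\tt d}_1^2}\ln\frac{nt}{\varepsilon\,p_1}=\frac{4}{{\tt d}_1^2}\Bigl(\ln\frac{t}{\varepsilon}+C\Bigr),\qquad C=\ln\frac{n}{p_1},$$ makes iterated learning $\varepsilon$-self-sustaining; that is, for every $t\ge 1$, the posterior $\bm h^t$ of learner $t$ satisfies $\bm h^t_1\ge 1-\varepsilon$.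
   Context: Root-sine distance: for probability vectors $\bm a,\bm b$ on $\mathcal D$, $d_{RS}(\bm a,\bm b)=\sqrt{1-\bigl(\sum_{i=1}^s\sqrt{a_ib_i}\bigr)^2}$. Chained iterated learning: for $\mathbf d=(x_1,\dots,x_m)\in\mathcal D^m$ let $\mathbb P[\mathbf d\mid h]=\prod_{k=1}^m\mathbb P[x_k\mid h]$ and Bayesian posterior $\mathbb P[h_j\mid\mathbf d]=\mathbb P[\mathbf d\mid h_j]p_j/\sum_{k=1}^n\mathbb P[\mathbf d\mid h_k]p_k$. Learner $t\ge1$ picks a hypothesis $h_i$ from the posterior of learner $t-1$ (for $t=1$, from $\bm h_{\mathrm{init}}$), draws $m_t$ i.i.d. samples $\mathbf d\in\mathcal D^{m_t}$ from $h_i$, and forms the posterior $\mathbb P[\cdot\mid\mathbf d]$. The transition probabilities are $P^{|t}_{ij}=\sum_{\mathbf d\in\mathcal D^{m_t}}\mathbb P[h_j\mid\mathbf d]\,\mathbb P[\mathbf d\mid h_i]$, and the (marginal) posterior of learner $t$ is the row vector $\bm h^t=\bm h^{t-1}P^{|t}$ with $\bm h^0=(1,0,\dots,0)$ (the point mass at $h_1$). Iterated learning is $\varepsilon$-self-sustaining if for every learner $t$, a random hypothesis drawn from $\bm h^t$ equals $\bm h_{\mathrm{init}}$ with probability at least $1-\varepsilon$. *)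

theory Defs
  imports Complex_Main
begin

text \<open>Data domain D = {0..<s}; hypotheses h_1..h_n are indexed 0..<n; hypothesis i is
  the distribution q i on D. Index 0 plays the role of h_1 (= h_init).\<close>

definition dRS :: "nat \<Rightarrow> (nat \<Rightarrow> real) \<Rightarrow> (nat \<Rightarrow> real) \<Rightarrow> real" where
  "dRS s a b = sqrt (1 - (\<Sum>i<s. sqrt (a i * b i))\<^sup>2)"

definition data_seqs :: "nat \<Rightarrow> nat \<Rightarrow> nat list set" where
  "data_seqs s m = {xs. length xs = m \<and> set xs \<subseteq> {..<s}}"

definition lik :: "(nat \<Rightarrow> nat \<Rightarrow> real) \<Rightarrow> nat \<Rightarrow> nat list \<Rightarrow> real" where
  "lik q i xs = prod_list (map (q i) xs)"

definition posterior :: "nat \<Rightarrow> (nat \<Rightarrow> nat \<Rightarrow> real) \<Rightarrow> (nat \<Rightarrow> real) \<Rightarrow> nat \<Rightarrow> nat list \<Rightarrow> real" where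
  "posterior n q p j xs = lik q j xs * p j / (\<Sum>k<n. lik q k xs * p k)"

definition trans_prob :: "nat \<Rightarrow> nat \<Rightarrow> (nat \<Rightarrow> nat \<Rightarrow> real) \<Rightarrow> (nat \<Rightarrow> real) \<Rightarrow> nat \<Rightarrow> nat \<Rightarrow> nat \<Rightarrow> real" where
  "trans_prob s n q p m i j = (\<Sum>xs\<in>data_seqs s m. posterior n q p j xs * lik q i xs)"

text \<open>Marginal posterior h^t of learner t; m t is the sample size of learner t (t \<ge> 1).\<close>
primrec hpost :: "nat \<Rightarrow> nat \<Rightarrow> (nat \<Rightarrow> nat \<Rightarrow> real) \<Rightarrow> (nat \<Rightarrow> real) \<Rightarrow> (nat \<Rightarrow> nat) \<Rightarrow> nat \<Rightarrow> nat \<Rightarrow> real" where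
  "hpost s n q p m 0 = (\<lambda>j. if j = 0 then 1 else 0)"
| "hpost s n q p m (Suc t) =
     (\<lambda>j. \<Sum>i<n. hpost s n q p m t i * trans_prob s n q p (m (Suc t)) i j)"

end

theory Submission imports Defs begin

text \<open>Write \<open>BC j\<close> for the Bhattacharyya coefficient of \<open>h\<^sub>1\<close> and \<open>h\<^sub>j\<close>, so that
  \<open>dRS = sqrt (1 - BC\<^sup>2)\<close> and \<open>BC j\<^sup>2 \<le> 1 - d\<^sub>1\<^sup>2\<close>. For a data sequence with likelihoods
  \<open>L\<^sub>k\<close>, the posterior mass missing from \<open>h\<^sub>1\<close>, weighted by \<open>L\<^sub>1\<close>, is at most
  \<open>\<Sum>\<^sub>j\<^sub>>\<^sub>1 sqrt (p\<^sub>j/p\<^sub>1) sqrt (L\<^sub>1 L\<^sub>j)\<close> by AM-GM; summing over all data sequences of length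
  \<open>m\<close> turns \<open>sqrt (L\<^sub>1 L\<^sub>j)\<close> into \<open>BC j ^ m \<le> exp (-d\<^sub>1\<^sup>2 m / 2)\<close>. With the prescribed
  \<open>m\<^sub>t\<close> this makes learner \<open>t\<close> lose at most \<open>\<epsilon>/(2t\<^sup>2)\<close> of the mass on \<open>h\<^sub>1\<close>, and since
  \<open>h\<^sup>t\<^sub>1 \<ge> h\<^sup>t\<^sup>-\<^sup>1\<^sub>1 P\<^sub>1\<^sub>1\<close> the total loss is at most \<open>\<Sum>\<^sub>t \<epsilon>/(2t\<^sup>2) \<le> \<epsilon>\<close>.\<close>

definition bhattacharyya :: "nat \<Rightarrow> (nat \<Rightarrow> real) \<Rightarrow> (nat \<Rightarrow> real) \<Rightarrow> real" where
  "bhattacharyya s a b = (\<Sum>x<s. sqrt (a x * b x))"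

lemma dRS_eq_bhattacharyya: "dRS s a b = sqrt (1 - (bhattacharyya s a b)\<^sup>2)"
  by (simp add: dRS_def bhattacharyya_def)

lemma bhattacharyya_square_le:
  assumes "0 \<le> d" "d \<le> dRS s a b"
  shows "(bhattacharyya s a b)\<^sup>2 \<le> 1 - d\<^sup>2"
proof -
  have d_le: "d \<le> sqrt (1 - (bhattacharyya s a b)\<^sup>2)"
    using assms(2) by (simp add: dRS_eq_bhattacharyya)
  then have "0 \<le> sqrt (1 - (bhattacharyya s a b)\<^sup>2)"
    using assms(1) by linarith
  moreover have "d\<^sup>2 \<le> (sqrt (1 - (bhattacharyya s a b)\<^sup>2))\<^sup>2"
    using d_le assms(1) by (intro power_mono) auto
  ultimately show ?thesis
    by simp
qed

lemma bhattacharyya_nonneg: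
  assumes "\<And>x. x < s \<Longrightarrow> a x \<ge> 0" "\<And>x. x < s \<Longrightarrow> b x \<ge> 0"
  shows "bhattacharyya s a b \<ge> 0"
  unfolding bhattacharyya_def using assms by (auto intro!: sum_nonneg)

lemma bhattacharyya_less_one:
  fixes a b :: "nat \<Rightarrow> real"
  assumes a: "\<And>x. x < s \<Longrightarrow> a x \<ge> 0" "(\<Sum>x<s. a x) = 1"
    and b: "\<And>x. x < s \<Longrightarrow> b x \<ge> 0" "(\<Sum>x<s. b x) = 1"
    and x0: "x0 < s" "a x0 \<noteq> b x0"
  shows "bhattacharyya s a b < 1"
proof -
  have "(\<Sum>x<s. (sqrt (a x) - sqrt (b x))\<^sup>2) = (\<Sum>x<s. a x + b x - 2 * sqrt (a x * b x))"
    using a(1) b(1) by (intro sum.cong) (simp_all add: power2_diff real_sqrt_mult)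
  also have "\<dots> = 2 - 2 * bhattacharyya s a b"
    using a(2) b(2) by (simp add: bhattacharyya_def sum.distrib sum_subtractf sum_distrib_left)
  finally have eq: "(\<Sum>x<s. (sqrt (a x) - sqrt (b x))\<^sup>2) = 2 - 2 * bhattacharyya s a b" .
  have "sqrt (a x0) \<noteq> sqrt (b x0)"
    using x0 a(1) b(1) by simp
  then have "(\<Sum>x<s. (sqrt (a x) - sqrt (b x))\<^sup>2) > 0"
    using x0(1) by (intro sum_pos2[where i=x0]) auto
  then show ?thesis
    using eq by simp
qed

lemma dRS_pos:
  fixes a b :: "nat \<Rightarrow> real"
  assumes "\<And>x. x < s \<Longrightarrow> a x \<ge> 0" "(\<Sum>x<s. a x) = 1"
    and "\<And>x. x < s \<Longrightarrow> b x \<ge> 0" "(\<Sum>x<s. b x) = 1"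
    and "\<exists>x<s. a x \<noteq> b x"
  shows "dRS s a b > 0"
proof -
  have "0 \<le> bhattacharyya s a b" "bhattacharyya s a b < 1"
    using assms bhattacharyya_nonneg bhattacharyya_less_one by blast+
  then have "(bhattacharyya s a b)\<^sup>2 < 1"
    by (simp add: power_less_one_iff)
  then show ?thesis
    by (simp add: dRS_eq_bhattacharyya)
qed

lemma data_seqs_Suc:
  "data_seqs s (Suc m) = (\<lambda>(x, xs). x # xs) ` ({..<s} \<times> data_seqs s m)"
  unfolding data_seqs_def by (auto simp: length_Suc_conv image_iff)

lemma sum_prod_list_data_seqs:
  "(\<Sum>xs\<in>data_seqs s m. prod_list (map f xs)) = (\<Sum>x<s. f x :: real) ^ m"
proof (induction m)
  case 0
  have "data_seqs s 0 = {[]}"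
    unfolding data_seqs_def by auto
  then show ?case by simp
next
  case (Suc m)
  have "inj_on (\<lambda>(x, xs). x # xs) ({..<s} \<times> data_seqs s m)"
    by (auto simp: inj_on_def)
  then have "(\<Sum>xs\<in>data_seqs s (Suc m). prod_list (map f xs))
      = (\<Sum>(x, xs)\<in>{..<s} \<times> data_seqs s m. f x * prod_list (map f xs))"
    unfolding data_seqs_Suc by (subst sum.reindex) (simp_all add: case_prod_beta)
  also have "\<dots> = (\<Sum>x<s. f x) * (\<Sum>xs\<in>data_seqs s m. prod_list (map f xs))"
    by (simp add: sum_product sum.cartesian_product)
  finally show ?case
    using Suc by simp
qed

lemma sqrt_mult_prod_list:
  "sqrt (prod_list (map f xs) * prod_list (map g xs)) = prod_list (map (\<lambda>x. sqrt (f x * g x)) xs)"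
  by (induction xs) (auto simp: real_sqrt_mult algebra_simps)

lemma mult_divide_add_le_sqrt:
  fixes x y :: real
  assumes "0 \<le> x" "0 \<le> y" "0 < x + y"
  shows "x * y / (x + y) \<le> sqrt (x * y)"
proof -
  have "sqrt (x * y) \<le> x + y"
    using arith_geo_mean_sqrt[OF assms(1,2)] assms by simp
  then have "sqrt (x * y) * sqrt (x * y) \<le> sqrt (x * y) * (x + y)"
    using assms by (intro mult_left_mono) auto
  then have "x * y \<le> sqrt (x * y) * (x + y)"
    using assms by simp
  then show ?thesis
    using assms(3) by (simp add: divide_le_eq)
qed

text \<open>The AM-GM estimate \<open>xy/(x+y) \<le> sqrt (xy)\<close> for \<open>x = L\<^sub>0 p\<^sub>0\<close>, \<open>y = L\<^sub>j p\<^sub>j\<close>.\<close>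
lemma posterior_term_le:
  fixes L0 Lj p0 pj D :: real
  assumes "0 < L0" "0 \<le> Lj" "0 < p0" "0 < pj" "L0 * p0 + Lj * pj \<le> D"
  shows "Lj * pj * L0 / D \<le> sqrt (pj / p0) * sqrt (L0 * Lj)"
proof -
  have pos: "0 < L0 * p0 + Lj * pj"
    using assms by (simp add: add_pos_nonneg)
  have "Lj * pj * L0 / D \<le> Lj * pj * L0 / (L0 * p0 + Lj * pj)"
    using assms pos by (intro divide_left_mono) auto
  also have "\<dots> = (L0 * p0) * (Lj * pj) / (L0 * p0 + Lj * pj) / p0"
    using assms pos by (simp add: divide_simps)
  also have "\<dots> \<le> sqrt ((L0 * p0) * (Lj * pj)) / p0"
    using assms pos by (intro divide_right_mono mult_divide_add_le_sqrt) auto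
  also have "\<dots> = sqrt (pj / p0) * sqrt (L0 * Lj)"
  proof -
    have "(L0 * p0) * (Lj * pj) = p0\<^sup>2 * (pj / p0 * (L0 * Lj))"
      using assms by (simp add: field_simps power2_eq_square)
    then have "sqrt ((L0 * p0) * (Lj * pj)) = p0 * (sqrt (pj / p0) * sqrt (L0 * Lj))"
      using assms by (simp only: real_sqrt_mult real_sqrt_abs abs_of_pos)
    then show ?thesis
      using assms by simp
  qed
  finally show ?thesis .
qed

lemma one_minus_posterior_mult_le:
  fixes L p :: "nat \<Rightarrow> real"
  assumes n: "n \<ge> 1" and L: "\<And>k. k < n \<Longrightarrow> L k \<ge> 0" and p: "\<And>k. k < n \<Longrightarrow> p k > 0"
  shows "(1 - L 0 * p 0 / (\<Sum>k<n. L k * p k)) * L 0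
          \<le> (\<Sum>j\<in>{1..<n}. sqrt (p j / p 0) * sqrt (L 0 * L j))"
proof (cases "L 0 = 0")
  case True
  then show ?thesis by (simp add: sum_nonneg)
next
  case False
  with L[of 0] n have L0: "L 0 > 0" by auto
  have p0: "p 0 > 0"
    using p n by auto
  define S where "S = (\<Sum>j\<in>{1..<n}. L j * p j)"
  define D where "D = L 0 * p 0 + S"
  have D: "(\<Sum>k<n. L k * p k) = D"
    unfolding D_def S_def lessThan_atLeast0 using n by (subst sum.atLeast_Suc_lessThan) auto
  have "S \<ge> 0"
    unfolding S_def using L p by (intro sum_nonneg mult_nonneg_nonneg) (auto intro: less_imp_le)
  then have Dpos: "D > 0"
    unfolding D_def using L0 p0 by (simp add: add_pos_nonneg)
  have "D - L 0 * p 0 = S"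
    by (simp add: D_def)
  then have "(1 - L 0 * p 0 / (\<Sum>k<n. L k * p k)) * L 0 = S / D * L 0"
    using Dpos unfolding D by (simp add: field_simps)
  also have "\<dots> = (\<Sum>j\<in>{1..<n}. L j * p j * L 0 / D)"
    by (simp add: S_def sum_divide_distrib sum_distrib_right)
  also have "\<dots> \<le> (\<Sum>j\<in>{1..<n}. sqrt (p j / p 0) * sqrt (L 0 * L j))"
  proof (rule sum_mono)
    fix j assume j: "j \<in> {1..<n}"
    have "L j * p j \<le> S"
      unfolding S_def using j L p by (intro member_le_sum) (auto intro!: mult_nonneg_nonneg intro: less_imp_le)
    then show "L j * p j * L 0 / D \<le> sqrt (p j / p 0) * sqrt (L 0 * L j)"
      using j L0 L[of j] p[of j] p0 by (intro posterior_term_le) (auto simp: D_def)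
  qed
  finally show ?thesis .
qed

lemma one_minus_sum_le_of_step_ge:
  fixes h c :: "nat \<Rightarrow> real"
  assumes h0: "h 0 = 1" and step: "\<And>t. h t * (1 - c (Suc t)) \<le> h (Suc t)"
    and c: "\<And>k. 0 \<le> c k" "\<And>k. c k \<le> 1"
  shows "1 - (\<Sum>k\<in>{1..t}. c k) \<le> h t"
proof (induction t)
  case 0
  then show ?case using h0 by simp
next
  case (Suc t)
  let ?S = "\<Sum>k\<in>{1..t}. c k"
  have "1 - (\<Sum>k\<in>{1..Suc t}. c k) \<le> (1 - ?S) * (1 - c (Suc t))"
    using c sum_nonneg[of "{1..t}" c] by (simp add: algebra_simps)
  also have "\<dots> \<le> h t * (1 - c (Suc t))"
    using Suc c(2)[of "Suc t"] by (intro mult_right_mono) auto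
  also have "\<dots> \<le> h (Suc t)"
    by (rule step)
  finally show ?case .
qed

lemma sum_inverse_squares_le:
  "t \<ge> 1 \<Longrightarrow> (\<Sum>k\<in>{1..t}. 1 / (real k)\<^sup>2) \<le> 2 - 1 / real t"
proof (induction t rule: dec_induct)
  case base
  then show ?case by simp
next
  case (step t)
  have "1 / (1 + real t)\<^sup>2 \<le> 1 / real t - 1 / (1 + real t)"
    using step by (simp add: divide_simps power2_eq_square)
  then show ?case
    using step by simp
qed

lemma sum_divide_twice_squares_le:
  fixes \<epsilon> :: real
  assumes "0 \<le> \<epsilon>"
  shows "(\<Sum>k\<in>{1..t}. \<epsilon> / (2 * (real k)\<^sup>2)) \<le> \<epsilon>"
proof (cases "t = 0")
  case False
  have "(\<Sum>k\<in>{1..t}. \<epsilon> / (2 * (real k)\<^sup>2)) = \<epsilon> / 2 * (\<Sum>k\<in>{1..t}. 1 / (real k)\<^sup>2)"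
    by (simp add: sum_distrib_left)
  also have "\<dots> \<le> \<epsilon> / 2 * 2"
  proof (rule mult_left_mono)
    have "(\<Sum>k\<in>{1..t}. 1 / (real k)\<^sup>2) \<le> 2 - 1 / real t"
      using False by (intro sum_inverse_squares_le) simp
    moreover have "0 \<le> 1 / real t"
      by simp
    ultimately show "(\<Sum>k\<in>{1..t}. 1 / (real k)\<^sup>2) \<le> 2"
      by linarith
  qed (use assms in simp)
  finally show ?thesis by simp
qed (simp add: assms)

lemma power_le_exp_of_square_le:
  fixes b d :: real
  assumes "0 \<le> b" "b\<^sup>2 \<le> 1 - d\<^sup>2"
  shows "b ^ M \<le> exp (- (d\<^sup>2 * real M / 2))"
proof -
  have "b\<^sup>2 \<le> exp (- d\<^sup>2)"
    using assms(2) exp_ge_add_one_self[of "- d\<^sup>2"] by linarith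
  then have "(b ^ M)\<^sup>2 \<le> exp (- d\<^sup>2) ^ M"
    using assms(1) by (metis power_mono power_mult zero_le_power2 mult.commute)
  also have "\<dots> = (exp (- (d\<^sup>2 * real M / 2)))\<^sup>2"
    by (simp flip: exp_of_nat_mult exp_add add: power2_eq_square)
  finally show ?thesis
    by (rule power2_le_imp_le) simp
qed

text \<open>Here \<open>L = nk/(\<epsilon>p\<^sub>0)\<close>, and the choice \<open>M \<ge> 4 ln L / d\<^sup>2\<close> gives \<open>b ^ M \<le> L\<^sup>-\<^sup>2\<close>.\<close>
lemma sqrt_prior_ratio_mult_power_le:
  fixes b d \<epsilon> p0 pj :: real and M n k :: nat
  assumes b: "0 \<le> b" "b\<^sup>2 \<le> 1 - d\<^sup>2" and d: "0 < d"
    and M: "4 / d\<^sup>2 * ln (real n * real k / (\<epsilon> * p0)) \<le> real M"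
    and nk: "n \<ge> 1" "k \<ge> 1" and \<epsilon>: "0 < \<epsilon>"
    and p0: "0 < p0" "p0 \<le> 1" and pj: "0 < pj" "pj \<le> 1"
  shows "sqrt (pj / p0) * b ^ M \<le> \<epsilon>\<^sup>2 * p0 / (real n * real k)\<^sup>2"
proof -
  define L where "L = real n * real k / (\<epsilon> * p0)"
  have L: "L > 0"
    unfolding L_def using nk \<epsilon> p0 by simp
  have "2 * ln L \<le> d\<^sup>2 * real M / 2"
    using M d unfolding L_def by (simp add: field_simps)
  then have "b ^ M \<le> exp (- (2 * ln L))"
    using power_le_exp_of_square_le[OF b, of M] by (meson exp_le_cancel_iff neg_le_iff_le order_trans)
  also have "\<dots> = 1 / L\<^sup>2"
    using L by (simp add: exp_minus exp_double inverse_eq_divide)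
  finally have bM: "b ^ M \<le> 1 / L\<^sup>2" .
  have "sqrt (pj / p0) \<le> sqrt (1 / p0\<^sup>2)"
    using p0 pj by (intro real_sqrt_le_mono) (auto simp: field_simps power2_eq_square intro: mult_le_one)
  then have sp: "sqrt (pj / p0) \<le> 1 / p0"
    using p0 by (simp add: real_sqrt_divide)
  have "sqrt (pj / p0) * b ^ M \<le> 1 / p0 * (1 / L\<^sup>2)"
    using sp bM b(1) p0 by (intro mult_mono) auto
  also have "\<dots> = \<epsilon>\<^sup>2 * p0 / (real n * real k)\<^sup>2"
    unfolding L_def using p0 \<epsilon> nk by (simp add: field_simps power2_eq_square)
  finally show ?thesis .
qed

locale hypothesis_space =
  fixes s n :: nat and q :: "nat \<Rightarrow> nat \<Rightarrow> real" and p :: "nat \<Rightarrow> real"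
  assumes q_nonneg: "\<And>i x. i < n \<Longrightarrow> x < s \<Longrightarrow> q i x \<ge> 0"
    and q_sum: "\<And>i. i < n \<Longrightarrow> (\<Sum>x<s. q i x) = 1"
    and p_pos: "\<And>i. i < n \<Longrightarrow> p i > 0"
    and p_sum: "(\<Sum>i<n. p i) = 1"
begin

lemma n_ge_1: "n \<ge> 1"
  using p_sum by (cases n) auto

lemma p_le_1: "j < n \<Longrightarrow> p j \<le> 1"
  using p_pos p_sum member_le_sum[of j "{..<n}" p] by (simp add: less_imp_le)

lemma lik_nonneg: "i < n \<Longrightarrow> xs \<in> data_seqs s m \<Longrightarrow> lik q i xs \<ge> 0"
  unfolding lik_def data_seqs_def using q_nonneg by (auto intro!: prod_list_nonneg simp: subset_iff)

lemma trans_prob_nonneg: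
  assumes "i < n" "j < n"
  shows "trans_prob s n q p m i j \<ge> 0"
  unfolding trans_prob_def posterior_def
  using assms lik_nonneg p_pos by (intro sum_nonneg mult_nonneg_nonneg divide_nonneg_nonneg)
    (auto intro!: sum_nonneg less_imp_le)

lemma hpost_nonneg: "j < n \<Longrightarrow> hpost s n q p m t j \<ge> 0"
  by (induction t arbitrary: j) (auto intro!: sum_nonneg mult_nonneg_nonneg trans_prob_nonneg)

lemma hpost_Suc_ge:
  "hpost s n q p m t 0 * trans_prob s n q p (m (Suc t)) 0 0 \<le> hpost s n q p m (Suc t) 0"
  using n_ge_1 hpost_nonneg trans_prob_nonneg
  by (auto intro!: member_le_sum[where i=0] mult_nonneg_nonneg)

lemma one_minus_trans_prob_le:
  "1 - trans_prob s n q p M 0 0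
     \<le> (\<Sum>j\<in>{1..<n}. sqrt (p j / p 0) * bhattacharyya s (q 0) (q j) ^ M)"
proof -
  let ?D = "data_seqs s M"
  have "(\<Sum>xs\<in>?D. lik q 0 xs) = 1"
    unfolding lik_def sum_prod_list_data_seqs using q_sum n_ge_1 by simp
  then have "1 - trans_prob s n q p M 0 0 = (\<Sum>xs\<in>?D. (1 - posterior n q p 0 xs) * lik q 0 xs)"
    unfolding trans_prob_def by (simp add: sum_subtractf algebra_simps)
  also have "\<dots> \<le> (\<Sum>xs\<in>?D. \<Sum>j\<in>{1..<n}. sqrt (p j / p 0) * sqrt (lik q 0 xs * lik q j xs))"
    unfolding posterior_def using n_ge_1 lik_nonneg p_pos
    by (intro sum_mono one_minus_posterior_mult_le) auto
  also have "\<dots> = (\<Sum>j\<in>{1..<n}. sqrt (p j / p 0) * (\<Sum>xs\<in>?D. sqrt (lik q 0 xs * lik q j xs)))"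
    by (subst sum.swap) (simp add: sum_distrib_left)
  also have "\<dots> = (\<Sum>j\<in>{1..<n}. sqrt (p j / p 0) * bhattacharyya s (q 0) (q j) ^ M)"
    unfolding lik_def sqrt_mult_prod_list sum_prod_list_data_seqs bhattacharyya_def ..
  finally show ?thesis .
qed

lemma hpost_ge_one_minus_sum:
  assumes loss: "\<And>k. k \<ge> 1 \<Longrightarrow> 1 - trans_prob s n q p (m k) 0 0 \<le> c k"
    and c: "\<And>k. 0 \<le> c k" "\<And>k. c k \<le> 1"
  shows "1 - (\<Sum>k\<in>{1..t}. c k) \<le> hpost s n q p m t 0"
proof (rule one_minus_sum_le_of_step_ge[OF _ _ c])
  fix k
  have "hpost s n q p m k 0 * (1 - c (Suc k))
      \<le> hpost s n q p m k 0 * trans_prob s n q p (m (Suc k)) 0 0"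
    using loss[of "Suc k"] hpost_nonneg[of 0] n_ge_1 by (intro mult_left_mono) auto
  then show "hpost s n q p m k 0 * (1 - c (Suc k)) \<le> hpost s n q p m (Suc k) 0"
    using hpost_Suc_ge[of m k] by linarith
qed simp

lemma Min_dRS_bounds:
  assumes q_distinct: "\<And>j. 0 < j \<Longrightarrow> j < n \<Longrightarrow> \<exists>x<s. q 0 x \<noteq> q j x"
    and j: "0 < j" "j < n"
  defines "d \<equiv> Min {dRS s (q 0) (q j) | j. 0 < j \<and> j < n}"
  shows "0 < d \<and> d \<le> dRS s (q 0) (q j)"
proof -
  have dists: "{dRS s (q 0) (q j) | j. 0 < j \<and> j < n} = (\<lambda>j. dRS s (q 0) (q j)) ` {1..<n}"
    by auto
  have "dRS s (q 0) (q i) > 0" if "i \<in> {1..<n}" for i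
    using that q_nonneg q_sum q_distinct by (intro dRS_pos) auto
  then have "0 < d"
    unfolding d_def dists using j by (subst Min_gr_iff) auto
  moreover have "d \<le> dRS s (q 0) (q j)"
    unfolding d_def dists using j by (intro Min_le) auto
  ultimately show ?thesis ..
qed

lemma one_minus_trans_prob_le_inverse_square:
  assumes d: "\<And>j. 0 < j \<Longrightarrow> j < n \<Longrightarrow> 0 < d \<and> d \<le> dRS s (q 0) (q j)"
    and M: "4 / d\<^sup>2 * ln (real n * real k / (\<epsilon> * p 0)) \<le> real M"
    and k: "k \<ge> 1" and \<epsilon>: "0 < \<epsilon>" "\<epsilon> \<le> 1"
  shows "1 - trans_prob s n q p M 0 0 \<le> \<epsilon> / (2 * (real k)\<^sup>2)"
proof -
  have p0: "0 < p 0" "p 0 \<le> 1"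
    using p_pos p_le_1 n_ge_1 by auto
  have "1 - trans_prob s n q p M 0 0
     \<le> (\<Sum>j\<in>{1..<n}. sqrt (p j / p 0) * bhattacharyya s (q 0) (q j) ^ M)"
    by (rule one_minus_trans_prob_le)
  also have "\<dots> \<le> (\<Sum>j\<in>{1..<n}. \<epsilon>\<^sup>2 * p 0 / (real n * real k)\<^sup>2)"
  proof (rule sum_mono)
    fix j assume j: "j \<in> {1..<n}"
    let ?b = "bhattacharyya s (q 0) (q j)"
    have b: "0 \<le> ?b"
      using j q_nonneg by (intro bhattacharyya_nonneg) auto
    have "?b\<^sup>2 \<le> 1 - d\<^sup>2"
      using d[of j] j by (intro bhattacharyya_square_le) auto
    then show "sqrt (p j / p 0) * ?b ^ M \<le> \<epsilon>\<^sup>2 * p 0 / (real n * real k)\<^sup>2"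
      using sqrt_prior_ratio_mult_power_le[OF b _ _ M n_ge_1 k \<epsilon>(1) p0] d[of j] j p_pos p_le_1 by auto
  qed
  also have "\<dots> = (real n - 1) / (real n)\<^sup>2 * (\<epsilon>\<^sup>2 * p 0) / (real k)\<^sup>2"
    using n_ge_1 by (simp add: of_nat_diff power_mult_distrib)
  also have "\<dots> \<le> 1 / 2 * \<epsilon> / (real k)\<^sup>2"
  proof -
    have "(real n - 1) / (real n)\<^sup>2 \<le> 1 / 2"
      using n_ge_1 sum_squares_ge_zero[of "real n - 1" 0] by (simp add: field_simps power2_eq_square)
    moreover have "\<epsilon>\<^sup>2 * p 0 \<le> \<epsilon>"
      using \<epsilon> p0 by (simp add: power2_eq_square mult_le_one mult_left_le)
    ultimately show ?thesis
      using n_ge_1 \<epsilon> p0 by (intro divide_right_mono mult_mono) auto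
  qed
  finally show ?thesis
    by simp
qed

end

theorem theorem1:
  fixes s n :: nat and q :: "nat \<Rightarrow> nat \<Rightarrow> real" and p :: "nat \<Rightarrow> real"
    and \<epsilon> d1 :: real and m :: "nat \<Rightarrow> nat"
  assumes q_nonneg: "\<And>i x. i < n \<Longrightarrow> x < s \<Longrightarrow> q i x \<ge> 0"
    and q_sum: "\<And>i. i < n \<Longrightarrow> (\<Sum>x<s. q i x) = 1"
    and q_distinct: "\<And>i j. i < n \<Longrightarrow> j < n \<Longrightarrow> i \<noteq> j \<Longrightarrow> (\<exists>x<s. q i x \<noteq> q j x)"
    and p_pos: "\<And>i. i < n \<Longrightarrow> p i > 0"
    and p_sum: "(\<Sum>i<n. p i) = 1"
    and d1_def: "d1 = Min {dRS s (q 0) (q j) | j. 0 < j \<and> j < n}"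
    and eps: "0 < \<epsilon>" "\<epsilon> < 1"
    and m_def: "\<And>t. t \<ge> 1 \<Longrightarrow>
        m t = nat \<lceil>4 / d1\<^sup>2 * ln (real n * real t / (\<epsilon> * p 0))\<rceil>"
  shows "\<forall>t\<ge>1. hpost s n q p m t 0 \<ge> 1 - \<epsilon>"
proof (intro allI impI)
  interpret hypothesis_space s n q p
    using q_nonneg q_sum p_pos p_sum by unfold_locales
  fix t :: nat assume "t \<ge> 1"
  have d1: "0 < d1 \<and> d1 \<le> dRS s (q 0) (q j)" if "0 < j" "j < n" for j
    unfolding d1_def using q_distinct that by (intro Min_dRS_bounds) auto
  have "1 - trans_prob s n q p (m k) 0 0 \<le> \<epsilon> / (2 * (real k)\<^sup>2)" if "k \<ge> 1" for k
  proof (rule one_minus_trans_prob_le_inverse_square[OF d1 _ that])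
    show "4 / d1\<^sup>2 * ln (real n * real k / (\<epsilon> * p 0)) \<le> real (m k)"
      unfolding m_def[OF that] by (rule real_nat_ceiling_ge)
  qed (use eps in auto)
  moreover have "\<epsilon> / (2 * (real k)\<^sup>2) \<le> 1" for k
  proof (cases "k = 0")
    case False
    then have "1 \<le> (real k)\<^sup>2"
      by (simp add: one_le_power)
    then show ?thesis
      using eps by (simp add: divide_le_eq)
  qed simp
  ultimately have "1 - (\<Sum>k\<in>{1..t}. \<epsilon> / (2 * (real k)\<^sup>2)) \<le> hpost s n q p m t 0"
    using eps by (intro hpost_ge_one_minus_sum) auto
  then show "hpost s n q p m t 0 \<ge> 1 - \<epsilon>"
    using sum_divide_twice_squares_le[of \<epsilon> t] eps by linarith
qed

end
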